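(* Let $a>0$, let $J$ be a standard normal random variable, and for $t\in[0,1]$ let $X(t)=(1-t)e^{2J}+ta$. Then there exists a constant $\mathcal C>0$, depending only on $a$, such that $d_{TV}(X(t),X(0))\le \mathcal C t$ for every $t\in[0,1]$.
   Context: $d_{TV}$ denotes the total variation distance between the distributions of the two random variables. *)

theory Defs
  imports "HOL-Probability.Probability"
begin

definition tv_dist :: "real measure \<Rightarrow> real measure \<Rightarrow> real" where
  "tv_dist P Q = (SUP A \<in> sets borel. \<bar>measure P A - measure Q A\<bar>)"

end

theory Submission
  imports Defs
begin

(* Write Y = exp (2 J), so that X(t) = c (Y + s) with c = 1 - t and s = t a / c, and c Y = exp (2 (J + d))
   with d = (ln c) / 2. Total variation does not increase under measurable maps, hence
   d_TV(X(t), Y) <= d_TV(Y + s, Y) + d_TV(J + d, J). Both terms compare a bounded unimodal density with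
   its translate, and for such a density f one has || f(. - s) - f ||_1 <= 3 (sup f) |s|. The law of Y is
   log-normal, with mode exp (-4), so both terms are O(t) for t <= 1/2; for t > 1/2 use d_TV <= 1. *)

lemma tv_dist_le:
  assumes "\<And>A. A \<in> sets borel \<Longrightarrow> \<bar>measure P A - measure Q A\<bar> \<le> c"
  shows "tv_dist P Q \<le> c"
  unfolding tv_dist_def by (rule cSUP_least) (use assms in auto)

lemma abs_measure_diff_le_1:
  assumes "prob_space P" "prob_space Q"
  shows "\<bar>measure P A - measure Q A\<bar> \<le> 1"
  using prob_space.prob_le_1[OF assms(1), of A] prob_space.prob_le_1[OF assms(2), of A]
    measure_nonneg[of P A] measure_nonneg[of Q A] by linarith

lemma abs_measure_diff_le_tv_dist:
  assumes "real_distribution P" "real_distribution Q" "A \<in> sets borel"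
  shows "\<bar>measure P A - measure Q A\<bar> \<le> tv_dist P Q"
  unfolding tv_dist_def
proof (rule cSUP_upper)
  have "\<bar>measure P B - measure Q B\<bar> \<le> 1" for B
    using assms by (simp add: real_distribution_def abs_measure_diff_le_1)
  then show "bdd_above ((\<lambda>B. \<bar>measure P B - measure Q B\<bar>) ` sets borel)"
    by (intro bdd_aboveI2)
qed fact

lemma tv_dist_le_1:
  assumes "real_distribution P" "real_distribution Q"
  shows "tv_dist P Q \<le> 1"
  using assms by (intro tv_dist_le) (simp add: real_distribution_def abs_measure_diff_le_1)

lemma tv_dist_triangle:
  assumes "real_distribution P" "real_distribution Q" "real_distribution R"
  shows "tv_dist P R \<le> tv_dist P Q + tv_dist Q R"
proof (rule tv_dist_le)
  fix A :: "real set" assume "A \<in> sets borel"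
  then have "\<bar>measure P A - measure Q A\<bar> \<le> tv_dist P Q" "\<bar>measure Q A - measure R A\<bar> \<le> tv_dist Q R"
    using assms by (auto intro: abs_measure_diff_le_tv_dist)
  then show "\<bar>measure P A - measure R A\<bar> \<le> tv_dist P Q + tv_dist Q R"
    by linarith
qed

lemma real_distribution_distr_borel:
  assumes "real_distribution P" and "f \<in> borel_measurable borel"
  shows "real_distribution (distr P borel f)"
proof -
  interpret real_distribution P by fact
  show ?thesis
    using assms(2) by (intro real_distribution_distr) simp
qed

lemma tv_dist_distr_le:
  assumes P: "real_distribution P" and Q: "real_distribution Q"
    and [measurable]: "f \<in> borel_measurable borel"
  shows "tv_dist (distr P borel f) (distr Q borel f) \<le> tv_dist P Q"
proof (rule tv_dist_le)
  fix A :: "real set" assume [measurable]: "A \<in> sets borel"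
  have "measure (distr R borel f) A = measure R (f -` A)" if "real_distribution R" for R
  proof -
    interpret real_distribution R by fact
    show ?thesis by (subst measure_distr) auto
  qed
  moreover have "f -` A \<in> sets borel"
    using measurable_sets[of f borel borel A] by simp
  ultimately show "\<bar>measure (distr P borel f) A - measure (distr Q borel f) A\<bar> \<le> tv_dist P Q"
    using P Q by (simp add: abs_measure_diff_le_tv_dist)
qed

section \<open>Translates of a bounded unimodal density\<close>

lemma measure_density_eq_integral:
  fixes f :: "'a \<Rightarrow> real"
  assumes "f \<in> borel_measurable M" "\<And>x. 0 \<le> f x" "A \<in> sets M"
  shows "measure (density M f) A = (\<integral>x. f x * indicator A x \<partial>M)"
proof -
  have "measure (density M f) A = integral\<^sup>L (density M f) (indicator A)"
    using sets.sets_into_space[OF assms(3)] by (simp add: Int_absorb2)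
  also have "\<dots> = (\<integral>x. f x * indicator A x \<partial>M)"
    using assms by (subst integral_density) auto
  finally show ?thesis .
qed

lemma tv_dist_density_le:
  fixes f g :: "real \<Rightarrow> real"
  assumes "sets M = sets borel" "integrable M f" "integrable M g" "\<And>x. 0 \<le> f x" "\<And>x. 0 \<le> g x"
  shows "tv_dist (density M f) (density M g) \<le> (\<integral>x. \<bar>f x - g x\<bar> \<partial>M)"
proof (rule tv_dist_le)
  fix A :: "real set" assume "A \<in> sets borel"
  then have A: "A \<in> sets M" using assms(1) by simp
  have int: "integrable M (\<lambda>x. (f x - g x) * indicator A x)"
    using assms A by (intro integrable_real_mult_indicator) auto
  have "measure (density M f) A - measure (density M g) A = (\<integral>x. (f x - g x) * indicator A x \<partial>M)"
    using assms A by (simp add: measure_density_eq_integral integrable_real_mult_indicator left_diff_distrib)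
  also have "\<bar>\<dots>\<bar> \<le> (\<integral>x. \<bar>(f x - g x) * indicator A x\<bar> \<partial>M)"
    by (rule integral_abs_bound)
  also have "\<dots> \<le> (\<integral>x. \<bar>f x - g x\<bar> \<partial>M)"
    using assms int by (intro integral_mono) (auto simp: indicator_def)
  finally show "\<bar>measure (density M f) A - measure (density M g) A\<bar> \<le> (\<integral>x. \<bar>f x - g x\<bar> \<partial>M)" .
qed

lemma distr_density_lborel_shift:
  fixes f :: "real \<Rightarrow> ennreal"
  assumes [measurable]: "f \<in> borel_measurable borel"
  shows "distr (density lborel f) borel (\<lambda>x. x + s) = density lborel (\<lambda>y. f (y - s))"
proof -
  have "density lborel (\<lambda>y. f (y - s)) = density (distr lborel borel ((+) s)) (\<lambda>y. f (y - s))"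
    by (simp add: lborel_distr_plus)
  also have "\<dots> = distr (density lborel f) borel ((+) s)"
    by (subst density_distr) auto
  moreover have "(\<lambda>x. x + s) = (+) s"
    by auto
  ultimately show ?thesis by simp
qed

lemma integral_indicator_diff_le:
  fixes f :: "'a \<Rightarrow> real"
  assumes f: "integrable M f" "\<And>x. f x \<le> K"
    and AB: "A \<subseteq> B" "A \<in> sets M" "B \<in> sets M" "emeasure M (B - A) < \<infinity>"
  shows "(\<integral>x. f x * indicator B x \<partial>M) - (\<integral>x. f x * indicator A x \<partial>M) \<le> K * measure M (B - A)"
proof -
  have "integrable M (\<lambda>x. f x * indicator C x)" if "C \<in> sets M" for C
    using that f by (intro integrable_real_mult_indicator)
  then have "(\<integral>x. f x * indicator B x \<partial>M) - (\<integral>x. f x * indicator A x \<partial>M)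
      = (\<integral>x. f x * indicator B x - f x * indicator A x \<partial>M)"
    using AB by simp
  also have "\<dots> = (\<integral>x. f x * indicator (B - A) x \<partial>M)"
    using AB by (intro Bochner_Integration.integral_cong) (auto simp: indicator_def)
  also have "\<dots> \<le> (\<integral>x. K * indicator (B - A) x \<partial>M)"
    using f AB by (intro integral_mono integrable_real_mult_indicator integrable_mult_right integrable_real_indicator)
      (auto simp: indicator_def)
  also have "\<dots> = K * measure M (B - A)"
    using AB by simp
  finally show ?thesis .
qed

lemma abs_shift_diff_unimodal_le:
  fixes f :: "real \<Rightarrow> real"
  assumes f: "\<And>x. 0 \<le> f x" "\<And>x. f x \<le> K"
    and mono: "mono_on {..m} f" "antimono_on {m..} f"
    and "0 \<le> s"
  shows "\<bar>f (y - s) - f y\<bar> \<le> (f y - f (y - s)) * indicator {..m} y + K * indicator {m<..m + s} y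
    + (f (y - s) - f y) * indicator {m + s<..} y"
proof -
  consider "y \<le> m" | "m < y" "y \<le> m + s" | "m + s < y"
    by linarith
  then show ?thesis
  proof cases
    case 1
    then have "f (y - s) \<le> f y"
      using mono(1) \<open>0 \<le> s\<close> by (auto simp: monotone_on_def)
    then show ?thesis
      using 1 \<open>0 \<le> s\<close> by (auto simp: indicator_def)
  next
    case 2
    then show ?thesis
      using f[of y] f[of "y - s"] by (auto simp: indicator_def)
  next
    case 3
    then have "f y \<le> f (y - s)"
      using mono(2) \<open>0 \<le> s\<close> by (auto simp: monotone_on_def)
    then show ?thesis
      using 3 \<open>0 \<le> s\<close> by (auto simp: indicator_def)
  qed
qed

(* Integrating the pointwise bound, the two outer terms telescope to the mass of f on intervals of
   length s, each at most K s. *)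
lemma integral_abs_shift_diff_unimodal_nonneg:
  fixes f :: "real \<Rightarrow> real"
  assumes f: "integrable lborel f" "\<And>x. 0 \<le> f x" "\<And>x. f x \<le> K"
    and mono: "mono_on {..m} f" "antimono_on {m..} f"
    and "0 \<le> s"
  shows "(\<integral>y. \<bar>f (y - s) - f y\<bar> \<partial>lborel) \<le> 3 * K * s"
proof -
  have [measurable]: "f \<in> borel_measurable borel"
    using borel_measurable_integrable[OF f(1)] by simp
  have f_shift: "integrable lborel (\<lambda>y. f (y - s))"
    using lborel_integrable_real_affine[OF f(1), of 1 "-s"] by simp
  have int: "integrable lborel (\<lambda>y. h y * indicator B y)"
    if "integrable lborel h" "B \<in> sets borel" for h :: "real \<Rightarrow> real" and B
    using that by (intro integrable_real_mult_indicator) auto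
  have shift: "(\<integral>y. f (y - s) * indicator B y \<partial>lborel) = (\<integral>x. f x * indicator C x \<partial>lborel)"
    if "\<And>x. x + s \<in> B \<longleftrightarrow> x \<in> C" for B C
    using lborel_integral_real_affine[of 1 "\<lambda>y. f (y - s) * indicator B y" s] that
    by (simp add: add.commute indicator_def)
  have "(\<integral>y. \<bar>f (y - s) - f y\<bar> \<partial>lborel)
      \<le> (\<integral>y. (f y - f (y - s)) * indicator {..m} y + K * indicator {m<..m + s} y
          + (f (y - s) - f y) * indicator {m + s<..} y \<partial>lborel)"
    using f f_shift mono \<open>0 \<le> s\<close>
    by (intro integral_mono abs_shift_diff_unimodal_le)
      (auto simp: left_diff_distrib intro!: Bochner_Integration.integrable_add
        Bochner_Integration.integrable_diff int integrable_mult_right integrable_real_indicator)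
  also have "\<dots> = ((\<integral>y. f y * indicator {..m} y \<partial>lborel) - (\<integral>y. f y * indicator {..m - s} y \<partial>lborel))
        + K * s
        + ((\<integral>y. f y * indicator {m<..} y \<partial>lborel) - (\<integral>y. f y * indicator {m + s<..} y \<partial>lborel))"
    using f(1) f_shift \<open>0 \<le> s\<close>
    by (simp add: left_diff_distrib int integrable_real_indicator
        shift[of "{..m}" "{..m - s}"] shift[of "{m + s<..}" "{m<..}"] le_diff_eq)
  also have "\<dots> \<le> K * s + K * s + K * s"
  proof -
    have "{..m} - {..m - s} = {m - s<..m}" "{m<..} - {m + s<..} = {m<..m + s}"
      using \<open>0 \<le> s\<close> by auto
    then show ?thesis
      using integral_indicator_diff_le[OF f(1,3), of "{..m - s}" "{..m}"]
        integral_indicator_diff_le[OF f(1,3), of "{m + s<..}" "{m<..}"] \<open>0 \<le> s\<close>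
      by simp
  qed
  finally show ?thesis
    by simp
qed

lemma integral_abs_shift_diff_unimodal:
  fixes f :: "real \<Rightarrow> real"
  assumes f: "integrable lborel f" "\<And>x. 0 \<le> f x" "\<And>x. f x \<le> K"
    and mono: "mono_on {..m} f" "antimono_on {m..} f"
  shows "(\<integral>y. \<bar>f (y - s) - f y\<bar> \<partial>lborel) \<le> 3 * K * \<bar>s\<bar>"
proof (cases "0 \<le> s")
  case True
  then show ?thesis
    using integral_abs_shift_diff_unimodal_nonneg[OF f mono] by simp
next
  case False
  have "(\<integral>y. \<bar>f (y - s) - f y\<bar> \<partial>lborel) = (\<integral>x. \<bar>f (x - (- s)) - f x\<bar> \<partial>lborel)"
    using lborel_integral_real_affine[of 1 "\<lambda>y. \<bar>f (y - s) - f y\<bar>" s]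
    by (simp add: abs_minus_commute add.commute)
  also have "\<dots> \<le> 3 * K * (- s)"
    using False by (intro integral_abs_shift_diff_unimodal_nonneg[OF f mono]) simp
  finally show ?thesis
    using False by simp
qed

lemma tv_dist_shift_unimodal_density:
  fixes f :: "real \<Rightarrow> real"
  assumes f: "integrable lborel f" "\<And>x. 0 \<le> f x" "\<And>x. f x \<le> K"
    and mono: "mono_on {..m} f" "antimono_on {m..} f"
  shows "tv_dist (distr (density lborel f) borel (\<lambda>x. x + s)) (density lborel f) \<le> 3 * K * \<bar>s\<bar>"
proof -
  have [measurable]: "f \<in> borel_measurable borel"
    using borel_measurable_integrable[OF f(1)] by simp
  have "integrable lborel (\<lambda>y. f (y - s))"
    using lborel_integrable_real_affine[OF f(1), of 1 "-s"] by simp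
  then have "tv_dist (density lborel (\<lambda>y. f (y - s))) (density lborel f) \<le> (\<integral>y. \<bar>f (y - s) - f y\<bar> \<partial>lborel)"
    using f by (intro tv_dist_density_le) auto
  also have "\<dots> \<le> 3 * K * \<bar>s\<bar>"
    using f mono by (rule integral_abs_shift_diff_unimodal)
  finally show ?thesis
    by (simp add: distr_density_lborel_shift)
qed

section \<open>The standard normal and log-normal densities\<close>

lemma one_le_sqrt_two_pi: "1 \<le> sqrt (2 * pi)"
  using pi_gt3 by (simp add: real_le_rsqrt)

lemma std_normal_density_le_1: "std_normal_density x \<le> 1"
  using one_le_sqrt_two_pi
  by (simp add: std_normal_density_def divide_le_eq order.trans[OF _ one_le_sqrt_two_pi])

lemma std_normal_density_abs_mono:
  assumes "\<bar>x\<bar> \<le> \<bar>y\<bar>"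
  shows "std_normal_density y \<le> std_normal_density x"
  using assms by (simp add: std_normal_density_def abs_le_square_iff divide_right_mono)

lemma mono_on_std_normal_density: "mono_on {..0} std_normal_density"
  by (intro monotone_onI std_normal_density_abs_mono) auto

lemma antimono_on_std_normal_density: "antimono_on {0..} std_normal_density"
  by (intro monotone_onI std_normal_density_abs_mono) auto

definition lognormal_density :: "real \<Rightarrow> real" where
  "lognormal_density u = (if 0 < u then std_normal_density (ln u / 2) / (2 * u) else 0)"

lemma lognormal_density_eq:
  assumes "0 < u"
  shows "lognormal_density u = exp (2 - (ln u + 4)\<^sup>2 / 8) / (2 * sqrt (2 * pi))"
proof -
  have "2 - (ln u + 4)\<^sup>2 / 8 = - (ln u / 2)\<^sup>2 / 2 - ln u"
    by (simp add: power2_eq_square field_simps)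
  then have "exp (2 - (ln u + 4)\<^sup>2 / 8) = exp (- (ln u / 2)\<^sup>2 / 2) / u"
    using assms by (simp add: exp_diff)
  then show ?thesis
    using assms by (simp add: lognormal_density_def std_normal_density_def)
qed

lemma lognormal_density_nonneg: "0 \<le> lognormal_density u"
  by (simp add: lognormal_density_def)

lemma borel_measurable_lognormal_density [measurable]: "lognormal_density \<in> borel_measurable borel"
  unfolding lognormal_density_def by measurable

lemma lognormal_density_le: "lognormal_density u \<le> exp 2"
proof (cases "0 < u")
  case True
  have "1 \<le> 2 * sqrt (2 * pi)"
    using one_le_sqrt_two_pi by linarith
  then have "exp 2 \<le> exp 2 * (2 * sqrt (2 * pi))"
    by simp
  moreover have "exp (2 - (ln u + 4)\<^sup>2 / 8) \<le> exp 2"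
    by simp
  ultimately have "exp (2 - (ln u + 4)\<^sup>2 / 8) \<le> exp 2 * (2 * sqrt (2 * pi))"
    by linarith
  then show ?thesis
    using True by (simp add: lognormal_density_eq divide_le_eq)
qed (simp add: lognormal_density_def)

lemma lognormal_density_abs_mono:
  assumes "0 < x" "0 < y" "\<bar>ln x + 4\<bar> \<le> \<bar>ln y + 4\<bar>"
  shows "lognormal_density y \<le> lognormal_density x"
  using assms by (simp add: lognormal_density_eq abs_le_square_iff divide_right_mono)

lemma mono_on_lognormal_density: "mono_on {..exp (-4)} lognormal_density"
proof (intro monotone_onI)
  fix x y :: real assume "x \<in> {..exp (-4)}" "y \<in> {..exp (-4)}" "x \<le> y"
  then show "lognormal_density x \<le> lognormal_density y"
  proof (cases "0 < x")
    case True
    with \<open>x \<le> y\<close> have "0 < y" "ln x \<le> ln y"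
      by simp_all
    moreover have "ln y \<le> ln (exp (-4))"
      using \<open>0 < y\<close> \<open>y \<in> {..exp (-4)}\<close> by (intro ln_mono) simp_all
    ultimately have "\<bar>ln y + 4\<bar> \<le> \<bar>ln x + 4\<bar>"
      by simp
    with \<open>0 < y\<close> True show ?thesis
      by (rule lognormal_density_abs_mono)
  qed (simp add: lognormal_density_def lognormal_density_nonneg)
qed

lemma antimono_on_lognormal_density: "antimono_on {exp (-4)..} lognormal_density"
proof (intro monotone_onI)
  fix x y :: real assume "x \<in> {exp (-4)..}" "y \<in> {exp (-4)..}" "x \<le> y"
  then have x: "exp (-4) \<le> x"
    by simp
  then have "0 < x"
    using exp_gt_zero[of "-4"] by linarith
  with \<open>x \<le> y\<close> have "0 < y" "ln x \<le> ln y"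
    by simp_all
  moreover have "ln (exp (-4)) \<le> ln x"
    using x by (intro ln_mono) simp_all
  ultimately have "\<bar>ln x + 4\<bar> \<le> \<bar>ln y + 4\<bar>"
    by simp
  with \<open>0 < x\<close> \<open>0 < y\<close> show "lognormal_density y \<le> lognormal_density x"
    by (rule lognormal_density_abs_mono)
qed

lemma nn_integral_lognormal_density:
  assumes [measurable]: "A \<in> sets borel"
  shows "(\<integral>\<^sup>+u. lognormal_density u * indicator A u \<partial>lborel)
    = (\<integral>\<^sup>+x. indicator A (exp (2 * x)) * std_normal_density x \<partial>lborel)"
proof -
  define F where "F x = indicator A (exp (2 * x)) * std_normal_density x" for x
  define S :: "real set" where "S = {0<..}"
  have F_nonneg: "0 \<le> F x" for x
    by (simp add: F_def)
  have "F = (\<lambda>x. std_normal_density x * indicator {x. exp (2 * x) \<in> A} x)"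
    by (simp add: fun_eq_iff F_def indicator_def)
  then have "integrable lborel F"
    by (simp add: integrable_real_mult_indicator)
  then have F_abs: "F absolutely_integrable_on UNIV"
    by (simp add: set_integrable_def integrable_completion)
  moreover have "(\<lambda>u. ln u / 2) ` S = UNIV"
  proof -
    have "x = ln (exp (2 * x)) / 2" for x :: real
      by simp
    then show ?thesis
      unfolding S_def by (metis (no_types, lifting) UNIV_eq_I exp_gt_zero greaterThan_iff image_eqI)
  qed
  moreover have "((\<lambda>u. ln u / 2) has_field_derivative 1 / (2 * u)) (at u within S)" if "u \<in> S" for u
    using that unfolding S_def by (auto intro!: derivative_eq_intros)
  moreover have "inj_on (\<lambda>u. ln u / 2) S"
    by (auto simp: S_def inj_on_def)
  ultimately have "(\<lambda>u. \<bar>1 / (2 * u)\<bar> * F (ln u / 2)) absolutely_integrable_on S"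
      "integral S (\<lambda>u. \<bar>1 / (2 * u)\<bar> * F (ln u / 2)) = integral UNIV F"
    using has_absolute_integral_change_of_variables_1'[of S "\<lambda>u. ln u / 2" "\<lambda>u. 1 / (2 * u)" F]
    by (auto simp: S_def)
  then have substituted: "((\<lambda>u. \<bar>1 / (2 * u)\<bar> * F (ln u / 2)) has_integral integral UNIV F) S"
    by (metis set_lebesgue_integral_eq_integral(1) has_integral_integral)
  have "indicator S u * (\<bar>1 / (2 * u)\<bar> * F (ln u / 2)) = lognormal_density u * indicator A u" for u
    by (cases "0 < u") (simp_all add: S_def F_def lognormal_density_def indicator_def)
  then have "(\<integral>\<^sup>+u. lognormal_density u * indicator A u \<partial>lborel) = integral UNIV F"
    using nn_integral_has_integral_lebesgue[OF _ substituted] F_nonneg by simp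
  also have "\<dots> = (\<integral>\<^sup>+x. F x \<partial>lborel)"
    using nn_integral_has_integral_lebesgue[OF _ integrable_integral, of UNIV F] F_nonneg
      set_lebesgue_integral_eq_integral(1)[OF F_abs] by simp
  finally show ?thesis
    by (simp add: F_def)
qed

lemma distr_std_normal_exp_double:
  "distr std_normal_distribution borel (\<lambda>x. exp (2 * x)) = density lborel lognormal_density"
proof (rule measure_eqI)
  fix A :: "real set" assume "A \<in> sets (distr std_normal_distribution borel (\<lambda>x. exp (2 * x)))"
  then have A [measurable]: "A \<in> sets borel"
    by simp
  have "emeasure (distr std_normal_distribution borel (\<lambda>x. exp (2 * x))) A
      = (\<integral>\<^sup>+x. indicator A (exp (2 * x)) * std_normal_density x \<partial>lborel)"
    using measurable_sets[of "\<lambda>x. exp (2 * x)" borel borel A]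
    by (subst emeasure_distr, simp, simp, subst emeasure_density)
      (auto simp: ennreal_mult' intro!: nn_integral_cong split: split_indicator)
  also have "\<dots> = (\<integral>\<^sup>+u. lognormal_density u * indicator A u \<partial>lborel)"
    by (rule nn_integral_lognormal_density[symmetric, OF A])
  also have "\<dots> = emeasure (density lborel lognormal_density) A"
    by (simp add: emeasure_density ennreal_mult'' ennreal_indicator)
  finally show "emeasure (distr std_normal_distribution borel (\<lambda>x. exp (2 * x))) A
      = emeasure (density lborel lognormal_density) A" .
qed simp

lemma real_distribution_lognormal: "real_distribution (density lborel lognormal_density)"
  unfolding distr_std_normal_exp_double[symmetric]
  by (intro real_distribution_distr_borel real_dist_normal_dist) simp

lemma integrable_lognormal_density: "integrable lborel lognormal_density"
proof (rule integrableI_nn_integral_finite)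
  have "prob_space (density lborel lognormal_density)"
    using real_distribution_lognormal by (simp add: real_distribution_def)
  then show "(\<integral>\<^sup>+x. ennreal (lognormal_density x) \<partial>lborel) = ennreal 1"
    using prob_space.emeasure_space_1 by (fastforce simp: emeasure_density)
qed (auto simp: lognormal_density_nonneg)

section \<open>Affine perturbations of exp (2 J)\<close>

lemma distr_distributed_comp:
  assumes J: "distributed M lborel J f" and [measurable]: "g \<in> borel_measurable borel"
  shows "distr M borel (\<lambda>\<omega>. g (J \<omega>)) = distr (density lborel f) borel g"
proof -
  have [measurable]: "J \<in> borel_measurable M"
    using distributed_measurable[OF J] by simp
  have "distr M borel (\<lambda>\<omega>. g (J \<omega>)) = distr (distr M lborel J) borel g"
    by (subst distr_distr) (auto simp: comp_def)
  then show ?thesis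
    by (simp add: distributed_distr_eq_density[OF J])
qed

lemma tv_dist_exp_std_normal_shift:
  "tv_dist (distr std_normal_distribution borel (\<lambda>x. c * (exp (2 * x) + s)))
           (distr std_normal_distribution borel (\<lambda>x. c * exp (2 * x)))
   \<le> 3 * exp 2 * \<bar>s\<bar>"
proof -
  let ?L = "density lborel lognormal_density"
  have "distr std_normal_distribution borel (\<lambda>x. c * (exp (2 * x) + s))
      = distr (distr ?L borel (\<lambda>y. y + s)) borel (\<lambda>y. c * y)"
    unfolding distr_std_normal_exp_double[symmetric] by (simp add: distr_distr comp_def)
  moreover have "distr std_normal_distribution borel (\<lambda>x. c * exp (2 * x)) = distr ?L borel (\<lambda>y. c * y)"
    unfolding distr_std_normal_exp_double[symmetric] by (simp add: distr_distr comp_def)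
  moreover have "tv_dist (distr (distr ?L borel (\<lambda>y. y + s)) borel (\<lambda>y. c * y)) (distr ?L borel (\<lambda>y. c * y))
      \<le> tv_dist (distr ?L borel (\<lambda>y. y + s)) ?L"
    by (intro tv_dist_distr_le real_distribution_distr_borel real_distribution_lognormal) auto
  moreover have "tv_dist (distr ?L borel (\<lambda>y. y + s)) ?L \<le> 3 * exp 2 * \<bar>s\<bar>"
    by (rule tv_dist_shift_unimodal_density[OF integrable_lognormal_density lognormal_density_nonneg
        lognormal_density_le mono_on_lognormal_density antimono_on_lognormal_density])
  ultimately show ?thesis
    by simp
qed

lemma tv_dist_exp_std_normal_scale:
  assumes "0 < c"
  shows "tv_dist (distr std_normal_distribution borel (\<lambda>x. c * exp (2 * x)))
                 (distr std_normal_distribution borel (\<lambda>x. exp (2 * x)))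
         \<le> 3 / 2 * \<bar>ln c\<bar>"
proof -
  let ?N = std_normal_distribution
  have "exp (2 * (x + ln c / 2)) = c * exp (2 * x)" for x
    using assms by (simp add: distrib_left exp_add)
  then have "distr ?N borel (\<lambda>x. c * exp (2 * x))
      = distr (distr ?N borel (\<lambda>x. x + ln c / 2)) borel (\<lambda>x. exp (2 * x))"
    by (simp add: distr_distr comp_def)
  moreover have "tv_dist (distr (distr ?N borel (\<lambda>x. x + ln c / 2)) borel (\<lambda>x. exp (2 * x)))
        (distr ?N borel (\<lambda>x. exp (2 * x)))
      \<le> tv_dist (distr ?N borel (\<lambda>x. x + ln c / 2)) ?N"
    by (intro tv_dist_distr_le real_distribution_distr_borel real_dist_normal_dist) auto
  moreover have "tv_dist (distr ?N borel (\<lambda>x. x + ln c / 2)) ?N \<le> 3 * 1 * \<bar>ln c / 2\<bar>"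
    by (rule tv_dist_shift_unimodal_density[OF integrable_normal_density normal_density_nonneg
        std_normal_density_le_1 mono_on_std_normal_density antimono_on_std_normal_density]) simp
  ultimately show ?thesis
    by simp
qed

lemma abs_ln_one_minus_le:
  fixes t :: real
  assumes "0 \<le> t" "t \<le> 1 / 2"
  shows "\<bar>ln (1 - t)\<bar> \<le> 2 * t"
proof -
  have "- t - 2 * t\<^sup>2 \<le> ln (1 - t)"
    using assms by (rule ln_one_minus_pos_lower_bound)
  moreover have "ln (1 - t) \<le> 0"
    using assms by simp
  moreover have "t * t \<le> t * (1 / 2)"
    using assms by (intro mult_left_mono) auto
  ultimately show ?thesis
    by (simp add: power2_eq_square)
qed

lemma tv_dist_exp_std_normal_affine:
  fixes a t :: real
  assumes t: "0 \<le> t" "t \<le> 1"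
  shows "tv_dist (distr std_normal_distribution borel (\<lambda>x. (1 - t) * exp (2 * x) + t * a))
                 (distr std_normal_distribution borel (\<lambda>x. exp (2 * x)))
         \<le> (6 * exp 2 * \<bar>a\<bar> + 3) * t"
    (is "tv_dist (?X t) ?Y \<le> ?C * t")
proof (cases "t \<le> 1 / 2")
  case False
  have "tv_dist (?X t) ?Y \<le> 1"
    by (intro tv_dist_le_1 real_distribution_distr_borel real_dist_normal_dist) auto
  also have "1 \<le> ?C * t"
    using False by (simp add: distrib_right add_increasing t)
  finally show ?thesis .
next
  case True
  define c where "c = 1 - t"
  define s where "s = t * a / c"
  have c: "1 / 2 \<le> c" "c \<le> 1"
    using t True by (auto simp: c_def)
  have "(\<lambda>x. (1 - t) * exp (2 * x) + t * a) = (\<lambda>x. c * (exp (2 * x) + s))"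
    using c by (auto simp: c_def s_def field_simps)
  then have "tv_dist (?X t) ?Y
      \<le> tv_dist (distr std_normal_distribution borel (\<lambda>x. c * (exp (2 * x) + s)))
           (distr std_normal_distribution borel (\<lambda>x. c * exp (2 * x)))
        + tv_dist (distr std_normal_distribution borel (\<lambda>x. c * exp (2 * x))) ?Y"
    by (auto intro!: tv_dist_triangle real_distribution_distr_borel real_dist_normal_dist)
  also have "\<dots> \<le> 3 * exp 2 * \<bar>s\<bar> + 3 / 2 * \<bar>ln c\<bar>"
    using tv_dist_exp_std_normal_shift tv_dist_exp_std_normal_scale[of c] c by (intro add_mono) auto
  also have "\<dots> \<le> ?C * t"
  proof -
    have "t * \<bar>a\<bar> * 1 \<le> t * \<bar>a\<bar> * (2 * c)"
      using c t by (intro mult_left_mono) auto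
    then have "\<bar>s\<bar> \<le> 2 * t * \<bar>a\<bar>"
      using c t by (simp add: s_def abs_mult divide_le_eq algebra_simps)
    then have "3 * exp 2 * \<bar>s\<bar> \<le> 6 * exp 2 * \<bar>a\<bar> * t"
      by (simp add: mult_ac)
    moreover have "\<bar>ln c\<bar> \<le> 2 * t"
      using abs_ln_one_minus_le[OF t(1) True] by (simp add: c_def)
    ultimately show ?thesis
      unfolding distrib_right by linarith
  qed
  finally show ?thesis .
qed

theorem lemma10:
  fixes a :: real
  assumes "a > 0"
  shows "\<exists>C>0. \<forall>(M :: 'a measure) (J :: 'a \<Rightarrow> real).
           prob_space M \<and> distributed M lborel J (\<lambda>x. ennreal (std_normal_density x)) \<longrightarrow>
           (\<forall>t\<in>{0..1::real}.
              tv_dist (distr M borel (\<lambda>\<omega>. (1 - t) * exp (2 * J \<omega>) + t * a))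
                      (distr M borel (\<lambda>\<omega>. (1 - 0) * exp (2 * J \<omega>) + 0 * a))
              \<le> C * t)"
proof (intro exI[of _ "6 * exp 2 * \<bar>a\<bar> + 3"] conjI allI impI ballI)
  \<comment> \<open>The bound holds for every real a.\<close>
  show "0 < 6 * exp 2 * \<bar>a\<bar> + 3"
    by (simp add: add_nonneg_pos)
  fix M :: "'a measure" and J :: "'a \<Rightarrow> real" and t :: real
  assume "prob_space M \<and> distributed M lborel J (\<lambda>x. ennreal (std_normal_density x))"
  then have J: "distributed M lborel J std_normal_density"
    by simp
  assume "t \<in> {0..1}"
  then show "tv_dist (distr M borel (\<lambda>\<omega>. (1 - t) * exp (2 * J \<omega>) + t * a))
                     (distr M borel (\<lambda>\<omega>. (1 - 0) * exp (2 * J \<omega>) + 0 * a))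
             \<le> (6 * exp 2 * \<bar>a\<bar> + 3) * t"
    using tv_dist_exp_std_normal_affine[of t a]
      distr_distributed_comp[OF J, of "\<lambda>x. (1 - t) * exp (2 * x) + t * a"]
      distr_distributed_comp[OF J, of "\<lambda>x. exp (2 * x)"]
    by simp
qed

end
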